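(* Consider a repeater chain in the model described in the context with $N+2$ nodes labelled $0,1,\dots,N+1$, where the end nodes $0$ and $N+1$ are a distance $L>0$ apart and the $N$ repeater nodes are placed along a line between them. Let $\ell_i>0$ denote the distance between nodes $i$ and $i+1$ for $i=0,\dots,N$, so that $\sum_{i=0}^N\ell_i=L$. Then the entangling rate $R$ of the chain, as a function of $(\ell_0,\dots,\ell_N)$, is maximal when the repeaters are placed equidistantly, i.e. when $\ell_i=L/(N+1)$ for all $i$.
   Context: Repeater-chain model (swap-ASAP, synchronized attempts). The chain has edges between consecutive nodes; edge $i$ has length $\ell_i\ge 0$ (in km). Entanglement generation proceeds in synchronized rounds, each of duration $t_{\mathrm{att}}=\frac1c\max_i\ell_i$ with $c=200{,}000$ km/s. In each round, every edge that has not yet succeeded makes an attempt which succeeds independently with probability $p_i=10^{-\alpha\ell_i/10}$, $\alpha=0.2\ \mathrm{km}^{-1}$. Thus the number of rounds $X_i$ until edge $i$ succeeds is geometric on $\{1,2,\dots\}$ with parameter $p_i$, the $X_i$ are independent, and end-to-end entanglement is complete after time $T_{\mathrm{done}}=t_{\mathrm{att}}\max_iX_i$. The entangling rate is $R=1/\mathbb E[T_{\mathrm{done}}]$. *)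

theory Defs
  imports "HOL-Probability.Probability"
begin

text \<open>Speed of light in fibre (km/s) and attenuation coefficient (1/km).\<close>
definition c_fib :: real where "c_fib = 200000"
definition alpha_att :: real where "alpha_att = 0.2"

definition succ_prob :: "real \<Rightarrow> real" where
  "succ_prob l = 10 powr (- alpha_att * l / 10)"

definition t_att :: "nat \<Rightarrow> (nat \<Rightarrow> real) \<Rightarrow> real" where
  "t_att N ell = Max (ell ` {..N}) / c_fib"

text \<open>Joint law of the numbers of rounds: X i = G i + 1 with G i independent,
  geometric on {0,1,...} with parameter p_i (number of failures before success).\<close>
definition rounds_pmf :: "nat \<Rightarrow> (nat \<Rightarrow> real) \<Rightarrow> (nat \<Rightarrow> nat) pmf" where
  "rounds_pmf N ell = Pi_pmf {..N} 0 (\<lambda>i. map_pmf Suc (geometric_pmf (succ_prob (ell i))))"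

definition T_done :: "nat \<Rightarrow> (nat \<Rightarrow> real) \<Rightarrow> (nat \<Rightarrow> nat) \<Rightarrow> real" where
  "T_done N ell X = t_att N ell * real (Max (X ` {..N}))"

definition ent_rate :: "nat \<Rightarrow> (nat \<Rightarrow> real) \<Rightarrow> real" where
  "ent_rate N ell = 1 / measure_pmf.expectation (rounds_pmf N ell) (T_done N ell)"

end

theory Submission
  imports Defs
begin

(* With p_i = exp (-a l_i), the expected number of rounds is the tail sum
   E[max X_i] = sum_k (1 - prod_i F(l_i, k)),  F(l, k) = 1 - (1 - exp (-a l))^k,
   F(l, k) being the probability that an edge of length l succeeds within k rounds.
   For fixed k the map l \<mapsto> F(l, k) is log-concave on (0, oo) (the derivative of -ln F is
   a k y^(k-1) / (1 + y + ... + y^(k-1)) with y = 1 - exp (-a l), increasing in l), so by Jensen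
   prod_i F(l_i, k) <= F(L/(N+1), k)^(N+1): equal spacing minimises every tail term.
   It also minimises the round duration, since max_i l_i is at least the mean L/(N+1). *)

lemma power_div_geometric_sum_mono:
  fixes y z :: real
  assumes "0 < y" "y \<le> z" "k \<ge> 1"
  shows "y^(k-1) / (\<Sum>i<k. y^i) \<le> z^(k-1) / (\<Sum>i<k. z^i)"
proof -
  have sum_pos: "(\<Sum>i<k. x^i) > 0" if "x > 0" for x :: real
    using assms(3) that by (intro sum_pos2[of _ 0]) auto
  have "y^(k-1) * (\<Sum>i<k. z^i) \<le> z^(k-1) * (\<Sum>i<k. y^i)"
    unfolding sum_distrib_left
  proof (rule sum_mono)
    fix j assume "j \<in> {..<k}"
    then have split: "k - 1 = j + (k - 1 - j)" by simp
    have "y^(k-1-j) \<le> z^(k-1-j)" using assms by (intro power_mono) auto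
    then have "(y*z)^j * y^(k-1-j) \<le> (y*z)^j * z^(k-1-j)"
      using assms by (intro mult_left_mono) auto
    then show "y^(k-1) * z^j \<le> z^(k-1) * y^j"
      by (subst (1 2) split) (simp add: power_add power_mult_distrib algebra_simps)
  qed
  then show ?thesis
    using sum_pos[of y] sum_pos[of z] assms by (simp add: divide_simps mult.commute)
qed

lemma convex_on_minus_ln_one_minus_power:
  fixes a :: real
  assumes "a > 0" "k \<ge> 1"
  shows "convex_on {0<..} (\<lambda>l. - ln (1 - (1 - exp (- (a * l)))^k))"
proof (rule convex_on_realI)
  show "connected {0::real<..}" by simp
next
  fix l :: real assume "l \<in> {0<..}"
  define y where "y = 1 - exp (- (a * l))"
  have y: "0 < y" "y < 1" unfolding y_def using assms \<open>l \<in> {0<..}\<close> by auto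
  have "((\<lambda>l. - ln (1 - (1 - exp (- (a * l)))^k)) has_real_derivative
      k * y^(k-1) * (a * exp (- (a * l))) / (1 - y^k)) (at l)"
    using y assms(2) unfolding y_def
    by (auto intro!: derivative_eq_intros simp: power_less_one_iff field_simps)
  moreover have "k * y^(k-1) * (a * exp (- (a * l))) / (1 - y^k) = a * k * (y^(k-1) / (\<Sum>i<k. y^i))"
  proof -
    have decay: "exp (- (a * l)) = 1 - y" unfolding y_def by simp
    have factor: "1 - y^k = (1 - y) * (\<Sum>i<k. y^i)" by (rule one_diff_power_eq)
    have "(\<Sum>i<k. y^i) > 0" using y assms(2) by (intro sum_pos2[of _ 0]) auto
    then show ?thesis using y unfolding decay factor by (simp add: field_simps)
  qed
  ultimately show "((\<lambda>l. - ln (1 - (1 - exp (- (a * l)))^k)) has_real_derivative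
      a * k * ((1 - exp (- (a * l)))^(k-1) / (\<Sum>i<k. (1 - exp (- (a * l)))^i))) (at l)"
    unfolding y_def by simp
next
  fix l l' :: real assume "l \<in> {0<..}" "l \<le> l'"
  then show "a * k * ((1 - exp (- (a * l)))^(k-1) / (\<Sum>i<k. (1 - exp (- (a * l)))^i))
      \<le> a * k * ((1 - exp (- (a * l')))^(k-1) / (\<Sum>i<k. (1 - exp (- (a * l')))^i))"
    using assms by (intro mult_left_mono power_div_geometric_sum_mono) auto
qed

lemma prod_le_power_mean_if_log_concave:
  fixes f :: "real \<Rightarrow> real" and x :: "'a \<Rightarrow> real"
  assumes "finite A" "A \<noteq> {}"
    and convex: "convex_on C (\<lambda>t. - ln (f t))"
    and pos: "\<And>t. t \<in> C \<Longrightarrow> f t > 0"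
    and mem: "\<And>i. i \<in> A \<Longrightarrow> x i \<in> C"
  shows "(\<Prod>i\<in>A. f (x i)) \<le> f ((\<Sum>i\<in>A. x i) / card A) ^ card A"
proof -
  define n where "n = real (card A)"
  define \<mu> where "\<mu> = (\<Sum>i\<in>A. x i) / n"
  have n: "n > 0" unfolding n_def using assms(1,2) by (simp add: card_gt_0_iff)
  have weights: "(\<Sum>i\<in>A. 1 / n) = 1" using n unfolding n_def by simp
  have mean: "(\<Sum>i\<in>A. (1 / n) *\<^sub>R x i) = \<mu>"
    unfolding \<mu>_def by (simp add: sum_divide_distrib)
  have "(\<Sum>i\<in>A. (1 / n) *\<^sub>R x i) \<in> C"
    using convex_sum[OF assms(1) convex_on_imp_convex[OF convex] weights] mem n by simp
  then have "\<mu> \<in> C" unfolding mean .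
  have "- ln (f (\<Sum>i\<in>A. (1 / n) *\<^sub>R x i)) \<le> (\<Sum>i\<in>A. (1 / n) * - ln (f (x i)))"
    by (rule convex_on_sum[OF assms(1,2) convex weights]) (use mem n in auto)
  then have "(\<Sum>i\<in>A. ln (f (x i))) / n \<le> ln (f \<mu>)"
    unfolding mean by (simp add: sum_negf sum_divide_distrib)
  then have "(\<Sum>i\<in>A. ln (f (x i))) \<le> n * ln (f \<mu>)"
    using n by (simp add: divide_le_eq mult.commute)
  moreover have "ln (\<Prod>i\<in>A. f (x i)) = (\<Sum>i\<in>A. ln (f (x i)))"
    by (rule ln_prod[OF assms(1)]) (use pos mem in force)
  ultimately have "ln (\<Prod>i\<in>A. f (x i)) \<le> ln (f \<mu> ^ card A)"
    using pos \<open>\<mu> \<in> C\<close> by (simp add: ln_realpow n_def)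
  then show ?thesis
    using pos mem \<open>\<mu> \<in> C\<close> unfolding \<mu>_def n_def by (simp add: prod_pos)
qed

lemma prod_le_power_equidistant:
  fixes a :: real and ell :: "nat \<Rightarrow> real"
  assumes "a > 0" "\<And>i. i \<le> N \<Longrightarrow> ell i > 0"
  shows "(\<Prod>i\<le>N. 1 - (1 - exp (- (a * ell i)))^k)
    \<le> (1 - (1 - exp (- (a * ((\<Sum>i\<le>N. ell i) / real (N + 1)))))^k) ^ (N + 1)"
proof (cases "k = 0")
  case False
  have "0 < 1 - (1 - exp (- (a * l)))^k" if "l > 0" for l
    using assms(1) that False by (simp add: power_less_one_iff)
  then show ?thesis
    using prod_le_power_mean_if_log_concave[of "{..N}" "{0<..}"
        "\<lambda>l. 1 - (1 - exp (- (a * l)))^k" ell]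
      convex_on_minus_ln_one_minus_power[of a k] assms False
    by simp
qed simp

lemma nn_integral_of_nat_eq_suminf_emeasure:
  fixes Y :: "'a \<Rightarrow> nat"
  assumes [measurable]: "Y \<in> M \<rightarrow>\<^sub>M count_space UNIV"
  shows "(\<integral>\<^sup>+x. of_nat (Y x) \<partial>M) = (\<Sum>k. emeasure M {x \<in> space M. k < Y x})"
proof -
  have count: "of_nat n = (\<Sum>k. of_bool (k < n) :: ennreal)" for n
  proof -
    have "(\<Sum>k. of_bool (k < n) :: ennreal) = (\<Sum>k<n. of_bool (k < n))"
      by (rule suminf_finite) auto
    then show ?thesis by simp
  qed
  have "(\<integral>\<^sup>+x. of_nat (Y x) \<partial>M) = (\<integral>\<^sup>+x. (\<Sum>k. indicator {x \<in> space M. k < Y x} x) \<partial>M)"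
    by (intro nn_integral_cong) (simp add: count indicator_def)
  also have "\<dots> = (\<Sum>k. \<integral>\<^sup>+x. indicator {x \<in> space M. k < Y x} x \<partial>M)"
    by (rule nn_integral_suminf) measurable
  also have "\<dots> = (\<Sum>k. emeasure M {x \<in> space M. k < Y x})"
    by (subst nn_integral_indicator) measurable
  finally show ?thesis .
qed

lemma succ_prob_eq_exp: "succ_prob l = exp (- (ln 10 / 50 * l))"
  unfolding succ_prob_def alpha_att_def powr_def by (simp add: field_simps)

lemma prob_shifted_geometric_atMost:
  assumes "0 < p" "p \<le> 1"
  shows "measure_pmf.prob (map_pmf Suc (geometric_pmf p)) {..k} = 1 - (1 - p)^k"
proof -
  have "Suc -` {..k} = {..<k}" by auto
  then have "measure_pmf.prob (map_pmf Suc (geometric_pmf p)) {..k} = measure_pmf.prob (geometric_pmf p) {..<k}"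
    by (simp add: measure_map_pmf)
  also have "\<dots> = (\<Sum>n<k. (1 - p)^n * p)"
    using assms by (simp add: measure_measure_pmf_finite)
  also have "\<dots> = 1 - (1 - p)^k"
    by (induction k) (auto simp: algebra_simps)
  finally show ?thesis .
qed

lemma prob_Max_rounds_atMost:
  assumes "\<And>i. i \<le> N \<Longrightarrow> ell i > 0"
  shows "measure_pmf.prob (rounds_pmf N ell) {X. Max (X ` {..N}) \<le> k}
    = (\<Prod>i\<le>N. 1 - (1 - succ_prob (ell i))^k)"
proof -
  have "{X. Max (X ` {..N}) \<le> k} = Pi {..N} (\<lambda>_. {..k})"
    by (auto simp: Pi_def)
  then have "measure_pmf.prob (rounds_pmf N ell) {X. Max (X ` {..N}) \<le> k}
      = (\<Prod>i\<le>N. measure_pmf.prob (map_pmf Suc (geometric_pmf (succ_prob (ell i)))) {..k})"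
    unfolding rounds_pmf_def by (simp add: measure_Pi_pmf_Pi)
  also have "\<dots> = (\<Prod>i\<le>N. 1 - (1 - succ_prob (ell i))^k)"
    using assms by (intro prod.cong refl prob_shifted_geometric_atMost) (auto simp: succ_prob_eq_exp less_imp_le)
  finally show ?thesis .
qed

definition expected_max_rounds :: "nat \<Rightarrow> (nat \<Rightarrow> real) \<Rightarrow> ennreal" where
  "expected_max_rounds N ell = (\<integral>\<^sup>+X. of_nat (Max (X ` {..N})) \<partial>rounds_pmf N ell)"

lemma expected_max_rounds_eq_suminf:
  assumes "\<And>i. i \<le> N \<Longrightarrow> ell i > 0"
  shows "expected_max_rounds N ell = (\<Sum>k. ennreal (1 - (\<Prod>i\<le>N. 1 - (1 - succ_prob (ell i))^k)))"
proof -
  have tail: "emeasure (rounds_pmf N ell) {X. k < Max (X ` {..N})}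
      = ennreal (1 - (\<Prod>i\<le>N. 1 - (1 - succ_prob (ell i))^k))" for k
  proof -
    have "{X. k < Max (X ` {..N})} = UNIV - {X. Max (X ` {..N}) \<le> k}"
      by (force simp: Max_gr_iff not_le)
    then have "emeasure (rounds_pmf N ell) {X. k < Max (X ` {..N})}
        = 1 - measure_pmf.prob (rounds_pmf N ell) {X. Max (X ` {..N}) \<le> k}"
      using measure_pmf.prob_compl[of "{X. Max (X ` {..N}) \<le> k}" "rounds_pmf N ell"]
      by (simp add: measure_pmf.emeasure_eq_measure)
    then show ?thesis by (simp only: prob_Max_rounds_atMost[OF assms])
  qed
  show ?thesis
    unfolding expected_max_rounds_def by (simp add: nn_integral_of_nat_eq_suminf_emeasure tail)
qed

lemma expected_max_rounds_equidistant_le: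
  assumes pos: "\<And>i. i \<le> N \<Longrightarrow> ell i > 0" and sum: "(\<Sum>i\<le>N. ell i) = L"
  shows "expected_max_rounds N (\<lambda>_. L / real (N + 1)) \<le> expected_max_rounds N ell"
proof -
  have "L > 0" unfolding sum[symmetric] using pos by (intro sum_pos) auto
  have "(\<Sum>k. ennreal (1 - (1 - (1 - succ_prob (L / real (N + 1)))^k) ^ (N + 1)))
      \<le> (\<Sum>k. ennreal (1 - (\<Prod>i\<le>N. 1 - (1 - succ_prob (ell i))^k)))"
  proof (intro suminf_le summableI allI ennreal_leI diff_left_mono)
    show "(\<Prod>i\<le>N. 1 - (1 - succ_prob (ell i))^k) \<le> (1 - (1 - succ_prob (L / real (N + 1)))^k) ^ (N + 1)"
      for k
      using prod_le_power_equidistant[of "ln 10 / 50" N ell k] pos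
      unfolding succ_prob_eq_exp sum by (simp add: mult.assoc)
  qed
  then show ?thesis
    using pos \<open>L > 0\<close> by (simp add: expected_max_rounds_eq_suminf)
qed

lemma one_le_expected_max_rounds:
  assumes "\<And>i. i \<le> N \<Longrightarrow> ell i > 0"
  shows "1 \<le> expected_max_rounds N ell"
proof -
  have "(\<Sum>k\<in>{0}. ennreal (1 - (\<Prod>i\<le>N. 1 - (1 - succ_prob (ell i))^k)))
      \<le> (\<Sum>k. ennreal (1 - (\<Prod>i\<le>N. 1 - (1 - succ_prob (ell i))^k)))"
    by (intro sum_le_suminf summableI) auto
  then show ?thesis
    using assms by (simp add: expected_max_rounds_eq_suminf)
qed

lemma expectation_T_done:
  "measure_pmf.expectation (rounds_pmf N ell) (T_done N ell)
    = t_att N ell * enn2real (expected_max_rounds N ell)"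
proof -
  have "measure_pmf.expectation (rounds_pmf N ell) (\<lambda>X. real (Max (X ` {..N})))
      = enn2real (expected_max_rounds N ell)"
    unfolding expected_max_rounds_def
    by (subst integral_eq_nn_integral) (auto simp: ennreal_of_nat_eq_real_of_nat)
  then show ?thesis
    unfolding T_done_def by simp
qed

lemma t_att_equidistant_le:
  assumes "(\<Sum>i\<le>N. ell i) = L"
  shows "t_att N (\<lambda>_. L / real (N + 1)) \<le> t_att N ell"
proof -
  have "L \<le> (\<Sum>i\<le>N. Max (ell ` {..N}))"
    unfolding assms[symmetric] by (intro sum_mono) auto
  then have "L / real (N + 1) \<le> Max (ell ` {..N})"
    by (simp add: field_simps)
  then show ?thesis
    unfolding t_att_def by (intro divide_right_mono) (auto simp: c_fib_def)
qed

theorem mainTheorem2: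
  fixes N :: nat and L :: real and ell :: "nat \<Rightarrow> real"
  assumes "L > 0"
    and "\<And>i. i \<le> N \<Longrightarrow> ell i > 0"
    and "(\<Sum>i\<le>N. ell i) = L"
  shows "ent_rate N ell \<le> ent_rate N (\<lambda>_. L / real (N + 1))"
proof -
  define m where "m = L / real (N + 1)"
  have "m > 0" unfolding m_def using assms(1) by simp
  then have t_pos: "t_att N (\<lambda>_. m) > 0"
    unfolding t_att_def c_fib_def by simp
  have t_le: "t_att N (\<lambda>_. m) \<le> t_att N ell"
    unfolding m_def using assms(3) by (rule t_att_equidistant_le)
  have E_le: "expected_max_rounds N (\<lambda>_. m) \<le> expected_max_rounds N ell"
    unfolding m_def using assms(2,3) by (rule expected_max_rounds_equidistant_le)
  have E_ge: "1 \<le> expected_max_rounds N (\<lambda>_. m)"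
    using \<open>m > 0\<close> by (intro one_le_expected_max_rounds)
  show ?thesis
  proof (cases "expected_max_rounds N ell = \<top>")
    case True
    \<comment> \<open>Cannot happen, but need not be excluded: then enn2real gives 0 and the rate is 1 / 0 = 0.\<close>
    with t_pos show ?thesis
      unfolding ent_rate_def expectation_T_done m_def[symmetric] by simp
  next
    case False
    then have "expected_max_rounds N ell < \<top>" by (simp add: top.not_eq_extremum)
    then have "1 \<le> enn2real (expected_max_rounds N (\<lambda>_. m))"
      "enn2real (expected_max_rounds N (\<lambda>_. m)) \<le> enn2real (expected_max_rounds N ell)"
      using enn2real_mono[OF E_ge] enn2real_mono[OF E_le] E_le by auto
    with t_pos t_le show ?thesis
      unfolding ent_rate_def expectation_T_done m_def[symmetric]
      by (intro divide_left_mono mult_mono mult_pos_pos) auto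
  qed
qed

end
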